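(* The natural surjection $BT(3,3)\to B(3,3)$ is an isomorphism.
   Context: $BT(3,3)$ is the quotient of the free group $\mathbb{F}_3$ by the normal subgroup generated by the cubes of all primitive elements (elements of some free basis) of $\mathbb{F}_3$; $B(3,3)$ is the free Burnside group of exponent $3$ on $3$ generators. *)

theory Defs
  imports "HOL-Algebra.Algebra"
begin

text \<open>Words over letters (generator, sign); sign True = generator, False = its inverse.
A word is (freely) reduced if no letter is immediately followed by its inverse.\<close>
definition reduced_word :: "('a \<times> bool) list \<Rightarrow> bool" where
  "reduced_word xs = (\<forall>i. Suc i < length xs \<longrightarrow>
      \<not> (fst (xs ! i) = fst (xs ! Suc i) \<and> snd (xs ! i) \<noteq> snd (xs ! Suc i)))"

fun push_letter :: "'a \<times> bool \<Rightarrow> ('a \<times> bool) list \<Rightarrow> ('a \<times> bool) list" where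
  "push_letter x [] = [x]"
| "push_letter x (y # ys) =
     (if fst x = fst y \<and> snd x \<noteq> snd y then ys else x # y # ys)"

definition reduce_word :: "('a \<times> bool) list \<Rightarrow> ('a \<times> bool) list" where
  "reduce_word xs = foldr push_letter xs []"

definition F3 :: "(nat \<times> bool) list monoid" where
  "F3 = \<lparr> carrier = {xs. reduced_word xs \<and> set xs \<subseteq> {0..<3} \<times> UNIV},
          monoid.mult = (\<lambda>xs ys. reduce_word (xs @ ys)),
          one = [] \<rparr>"

definition word_eval :: "('a, 'b) monoid_scheme \<Rightarrow> ('a \<times> bool) list \<Rightarrow> 'a" where
  "word_eval G ws = foldr (\<lambda>(b, s) acc. (if s then b else inv\<^bsub>G\<^esub> b) \<otimes>\<^bsub>G\<^esub> acc) ws \<one>\<^bsub>G\<^esub>"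

definition free_basis :: "('a, 'b) monoid_scheme \<Rightarrow> 'a set \<Rightarrow> bool" where
  "free_basis G B \<longleftrightarrow> B \<subseteq> carrier G \<and> generate G B = carrier G \<and>
     (\<forall>ws. ws \<noteq> [] \<and> set ws \<subseteq> B \<times> UNIV \<and> reduced_word ws \<longrightarrow> word_eval G ws \<noteq> \<one>\<^bsub>G\<^esub>)"

definition primitive :: "('a, 'b) monoid_scheme \<Rightarrow> 'a \<Rightarrow> bool" where
  "primitive G x \<longleftrightarrow> (\<exists>B. free_basis G B \<and> x \<in> B)"

definition normal_closure :: "('a, 'b) monoid_scheme \<Rightarrow> 'a set \<Rightarrow> 'a set" where
  "normal_closure G S = \<Inter> {N. N \<lhd> G \<and> S \<subseteq> N}"

text \<open>Kernel of F_3 \<rightarrow> BT(3,3) and of F_3 \<rightarrow> B(3,3).\<close>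
definition N_BT :: "(nat \<times> bool) list set" where
  "N_BT = normal_closure F3 {x [^]\<^bsub>F3\<^esub> (3::nat) | x. primitive F3 x}"

definition N_B :: "(nat \<times> bool) list set" where
  "N_B = normal_closure F3 {x [^]\<^bsub>F3\<^esub> (3::nat) | x. x \<in> carrier F3}"

end

theory Submission
  imports Defs
begin

(*
  Both kernels are normal closures of sets of cubes, and the map is the identity of F3/N_BT as soon as
  N_B = N_BT; the content is that every cube lies in N_BT, i.e. that Q = F3/N_BT has exponent 3.

  Let x_0, x_1, x_2 be the images in Q of the generators. If the word v avoids the generator i, then
  x_i v is primitive in F3 (it is the image of x_i under a transvection), so (x_i v)^3 = 1 in Q.
  Adding the generators one at a time, it therefore suffices to show: if a subgroup K has exponent 3
  and (x k)^3 = 1 for all k in K, then <x, K> has exponent 3. By Levi's lemma the conjugates x^h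
  (h in K) commute pairwise, so they generate an abelian subgroup A normalised by K with <x, K> = A K,
  and (a k)^3 = a a^(k^-1) a^(k^-2) k^3 is multiplicative in a on A and trivial on the generators x^h.
*)

section \<open>Levi's lemma and groups of exponent 3\<close>

lemma (in monoid) nat_pow_three: "x \<in> carrier G \<Longrightarrow> x [^] (3::nat) = x \<otimes> x \<otimes> x"
  by (simp add: numeral_3_eq_3)

definition conjugate :: "('a, 'b) monoid_scheme \<Rightarrow> 'a \<Rightarrow> 'a \<Rightarrow> 'a" where
  "conjugate G h z = inv\<^bsub>G\<^esub> h \<otimes>\<^bsub>G\<^esub> z \<otimes>\<^bsub>G\<^esub> h"

context group
begin

lemma mult_inv_cancel_left [simp]: "x \<in> carrier G \<Longrightarrow> y \<in> carrier G \<Longrightarrow> x \<otimes> (inv x \<otimes> y) = y"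
  and inv_mult_cancel_left [simp]: "x \<in> carrier G \<Longrightarrow> y \<in> carrier G \<Longrightarrow> inv x \<otimes> (x \<otimes> y) = y"
  by (simp_all flip: m_assoc)

lemma conjugate_closed [intro, simp]:
  "h \<in> carrier G \<Longrightarrow> z \<in> carrier G \<Longrightarrow> conjugate G h z \<in> carrier G"
  by (simp add: conjugate_def)

lemma conjugate_hom: "h \<in> carrier G \<Longrightarrow> group_hom G G (conjugate G h)"
  unfolding group_hom_def group_hom_axioms_def
  by (auto intro!: homI simp: conjugate_def m_assoc is_group)

lemma conjugate_conjugate:
  "h \<in> carrier G \<Longrightarrow> k \<in> carrier G \<Longrightarrow> z \<in> carrier G \<Longrightarrow>
    conjugate G h (conjugate G k z) = conjugate G (k \<otimes> h) z"
  by (simp add: conjugate_def m_assoc inv_mult_group)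

lemma conjugate_one: "z \<in> carrier G \<Longrightarrow> conjugate G \<one> z = z"
  by (simp add: conjugate_def)

lemma cube_one_imp_aba_eq:
  assumes "a \<in> carrier G" "b \<in> carrier G" "(a \<otimes> b) \<otimes> (a \<otimes> b) \<otimes> (a \<otimes> b) = \<one>"
  shows "a \<otimes> b \<otimes> a = inv b \<otimes> inv a \<otimes> inv b"
proof -
  have "(a \<otimes> b \<otimes> a) \<otimes> (b \<otimes> a \<otimes> b) = \<one>" using assms by (simp add: m_assoc)
  then have "a \<otimes> b \<otimes> a = inv (b \<otimes> a \<otimes> b)" using assms by (simp add: inv_equality[symmetric])
  with assms show ?thesis by (simp add: inv_mult_group m_assoc)
qed

text \<open>Levi's lemma (in a group of exponent 3 conjugate elements commute), with exactly the
  three cubes its proof uses as hypotheses.\<close>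
lemma commute_conjugate_of_cubes_one:
  assumes y: "y \<in> carrier G" and h: "h \<in> carrier G" and h3: "h \<otimes> h \<otimes> h = \<one>"
    and yh: "(y \<otimes> h) \<otimes> (y \<otimes> h) \<otimes> (y \<otimes> h) = \<one>"
    and yh': "(y \<otimes> inv h) \<otimes> (y \<otimes> inv h) \<otimes> (y \<otimes> inv h) = \<one>"
  shows "y \<otimes> conjugate G h y = conjugate G h y \<otimes> y"
proof -
  have hh: "h \<otimes> h = inv h" using h h3 by (simp add: inv_equality)
  then have ihih: "inv h \<otimes> inv h = h" using h by (simp add: inv_mult_group[symmetric])
  have "y \<otimes> conjugate G h y = (y \<otimes> inv h \<otimes> y) \<otimes> h"
    using y h by (simp add: conjugate_def m_assoc)
  also have "\<dots> = h \<otimes> inv y \<otimes> (h \<otimes> h)"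
    using cube_one_imp_aba_eq[OF y _ yh'] y h by (simp add: m_assoc)
  also have "\<dots> = inv h \<otimes> inv h \<otimes> inv y \<otimes> inv h"
    using hh ihih by simp
  also have "\<dots> = inv h \<otimes> (y \<otimes> h \<otimes> y)"
    using cube_one_imp_aba_eq[OF y h yh] y h by (simp add: m_assoc)
  also have "\<dots> = conjugate G h y \<otimes> y"
    using y h by (simp add: conjugate_def m_assoc)
  finally show ?thesis .
qed

lemma commute_inv:
  assumes "g \<in> carrier G" "t \<in> carrier G" "g \<otimes> t = t \<otimes> g"
  shows "inv g \<otimes> t = t \<otimes> inv g"
proof -
  have "inv g \<otimes> t = inv g \<otimes> (t \<otimes> g) \<otimes> inv g" using assms(1,2) by (simp add: m_assoc)
  also have "\<dots> = inv g \<otimes> (g \<otimes> t) \<otimes> inv g" by (simp only: assms(3))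
  also have "\<dots> = t \<otimes> inv g" using assms(1,2) by simp
  finally show ?thesis .
qed

lemma subgroup_centralizer:
  assumes "T \<subseteq> carrier G"
  shows "subgroup {g \<in> carrier G. \<forall>t\<in>T. g \<otimes> t = t \<otimes> g} G"
proof (rule subgroupI)
  fix a b assume ab: "a \<in> {g \<in> carrier G. \<forall>t\<in>T. g \<otimes> t = t \<otimes> g}" "b \<in> {g \<in> carrier G. \<forall>t\<in>T. g \<otimes> t = t \<otimes> g}"
  have "a \<otimes> b \<otimes> t = t \<otimes> (a \<otimes> b)" if t: "t \<in> T" for t
  proof -
    have closed: "a \<in> carrier G" "b \<in> carrier G" "t \<in> carrier G" using ab t assms by auto
    have "a \<otimes> b \<otimes> t = a \<otimes> (t \<otimes> b)" using ab t closed by (simp add: m_assoc)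
    also have "\<dots> = (t \<otimes> a) \<otimes> b" using ab t closed by (simp flip: m_assoc)
    finally show ?thesis using closed by (simp add: m_assoc)
  qed
  with ab show "a \<otimes> b \<in> {g \<in> carrier G. \<forall>t\<in>T. g \<otimes> t = t \<otimes> g}" by simp
next
  show "{g \<in> carrier G. \<forall>t\<in>T. g \<otimes> t = t \<otimes> g} \<noteq> {}"
    using assms by (auto intro!: exI[of _ \<one>])
qed (use assms commute_inv in auto)

lemma generate_commute:
  assumes S: "S \<subseteq> carrier G" and comm: "\<forall>a\<in>S. \<forall>b\<in>S. a \<otimes> b = b \<otimes> a"
    and a: "a \<in> generate G S" and b: "b \<in> generate G S"
  shows "a \<otimes> b = b \<otimes> a"
proof -
  have "S \<subseteq> {g \<in> carrier G. \<forall>t\<in>S. g \<otimes> t = t \<otimes> g}" using S comm by blast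
  then have "generate G S \<subseteq> {g \<in> carrier G. \<forall>t\<in>S. g \<otimes> t = t \<otimes> g}"
    by (intro generate_subgroup_incl subgroup_centralizer S)
  then have "S \<subseteq> {g \<in> carrier G. \<forall>t\<in>generate G S. g \<otimes> t = t \<otimes> g}" using S by auto
  then have "generate G S \<subseteq> {g \<in> carrier G. \<forall>t\<in>generate G S. g \<otimes> t = t \<otimes> g}"
    by (intro generate_subgroup_incl subgroup_centralizer generate_incl S)
  with a b show ?thesis by blast
qed

lemma cube_mult_eq:
  assumes z: "z \<in> carrier G" and k: "k \<in> carrier G" and k3: "k \<otimes> k \<otimes> k = \<one>"
  shows "(z \<otimes> k) \<otimes> (z \<otimes> k) \<otimes> (z \<otimes> k)
    = z \<otimes> conjugate G (inv k) z \<otimes> conjugate G (inv k) (conjugate G (inv k) z)"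
proof -
  have "(z \<otimes> k) \<otimes> (z \<otimes> k) \<otimes> (z \<otimes> k)
      = z \<otimes> conjugate G (inv k) z \<otimes> conjugate G (inv k) (conjugate G (inv k) z) \<otimes> (k \<otimes> k \<otimes> k)"
    using z k by (simp add: conjugate_def m_assoc)
  with k3 z k show ?thesis by simp
qed

lemma twisted_cube_mult:
  assumes A: "A \<subseteq> carrier G" and comm: "\<forall>a\<in>A. \<forall>b\<in>A. a \<otimes> b = b \<otimes> a"
    and k: "k \<in> carrier G" and stable: "\<forall>a\<in>A. conjugate G k a \<in> A"
    and a: "a \<in> A" and b: "b \<in> A"
  shows "(a \<otimes> b) \<otimes> conjugate G k (a \<otimes> b) \<otimes> conjugate G k (conjugate G k (a \<otimes> b))
    = (a \<otimes> conjugate G k a \<otimes> conjugate G k (conjugate G k a))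
      \<otimes> (b \<otimes> conjugate G k b \<otimes> conjugate G k (conjugate G k b))"
proof -
  interpret c: group_hom G G "conjugate G k" using conjugate_hom[OF k] .
  let ?c = "conjugate G k"
  have in_A: "?c a \<in> A" "?c b \<in> A" "?c (?c a) \<in> A" "?c (?c b) \<in> A"
    using stable a b by auto
  then have closed: "a \<in> carrier G" "b \<in> carrier G" "?c a \<in> carrier G" "?c b \<in> carrier G"
      "?c (?c a) \<in> carrier G" "?c (?c b) \<in> carrier G"
    using A a b by auto
  have swap: "x \<otimes> (y \<otimes> z) = y \<otimes> (x \<otimes> z)"
    if "x \<in> A" "y \<in> A" "z \<in> carrier G" for x y z
  proof -
    have closed: "x \<in> carrier G" "y \<in> carrier G" using that A by auto
    have "x \<otimes> (y \<otimes> z) = (x \<otimes> y) \<otimes> z" using closed that by (simp add: m_assoc)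
    also have "\<dots> = (y \<otimes> x) \<otimes> z" using comm that by simp
    finally show ?thesis using closed that by (simp add: m_assoc)
  qed
  show ?thesis
    using closed in_A a b
    by (simp add: m_assoc swap[of b "?c a"] swap[of b "?c (?c a)"] swap[of "?c b" "?c (?c a)"])
qed

lemma conjugates_commute:
  assumes x: "x \<in> carrier G" and K: "subgroup K G" and K3: "\<forall>k\<in>K. k \<otimes> k \<otimes> k = \<one>"
    and xK3: "\<forall>k\<in>K. (x \<otimes> k) \<otimes> (x \<otimes> k) \<otimes> (x \<otimes> k) = \<one>"
    and a: "a \<in> generate G ((\<lambda>h. conjugate G h x) ` K)"
    and b: "b \<in> generate G ((\<lambda>h. conjugate G h x) ` K)"
  shows "a \<otimes> b = b \<otimes> a"
proof (rule generate_commute[OF _ _ a b])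
  show "(\<lambda>h. conjugate G h x) ` K \<subseteq> carrier G"
    using x subgroup.subset[OF K] by auto
  have "conjugate G h x \<otimes> conjugate G h' x = conjugate G h' x \<otimes> conjugate G h x"
    if h: "h \<in> K" "h' \<in> K" for h h'
  proof -
    define k where "k = h' \<otimes> inv h"
    have k: "k \<in> K" "inv k \<in> K" using h K by (auto simp: k_def subgroup.m_closed subgroup.m_inv_closed)
    have carr: "h \<in> carrier G" "h' \<in> carrier G" "k \<in> carrier G"
      using h k subgroup.subset[OF K] by auto
    then have h': "h' = k \<otimes> h" by (simp add: k_def m_assoc)
    interpret c: group_hom G G "conjugate G h" using conjugate_hom carr by blast
    have "x \<otimes> conjugate G k x = conjugate G k x \<otimes> x"
      using k carr x K3 xK3 by (intro commute_conjugate_of_cubes_one) (auto simp: inv_inv)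
    then have "conjugate G h x \<otimes> conjugate G h (conjugate G k x)
        = conjugate G h (conjugate G k x) \<otimes> conjugate G h x"
      using carr x by (simp flip: c.hom_mult)
    with carr x show ?thesis by (simp add: h' conjugate_conjugate)
  qed
  then show "\<forall>a\<in>(\<lambda>h. conjugate G h x) ` K. \<forall>b\<in>(\<lambda>h. conjugate G h x) ` K. a \<otimes> b = b \<otimes> a"
    by blast
qed

lemma conjugate_in_generate_conjugates:
  assumes x: "x \<in> carrier G" and K: "subgroup K G" and k: "k \<in> K"
    and a: "a \<in> generate G ((\<lambda>h. conjugate G h x) ` K)"
  shows "conjugate G k a \<in> generate G ((\<lambda>h. conjugate G h x) ` K)"
proof -
  let ?X = "(\<lambda>h. conjugate G h x) ` K"
  have carr: "k \<in> carrier G" "K \<subseteq> carrier G" using k subgroup.subset[OF K] by auto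
  interpret c: group_hom G G "conjugate G k" using conjugate_hom carr by blast
  have "conjugate G k ` ?X \<subseteq> ?X"
    using carr x k K by (auto simp: conjugate_conjugate subset_iff subgroup.m_closed)
  then have "generate G (conjugate G k ` ?X) \<subseteq> generate G ?X"
    by (rule mono_generate)
  then have "conjugate G k ` generate G ?X \<subseteq> generate G ?X"
    using carr x by (subst c.generate_img[symmetric]) auto
  with a show ?thesis by blast
qed

lemma generate_insert_subset_set_mult:
  assumes x: "x \<in> carrier G" and K: "subgroup K G"
  shows "generate G (insert x K) \<subseteq> generate G ((\<lambda>h. conjugate G h x) ` K) <#> K"
proof
  let ?A = "generate G ((\<lambda>h. conjugate G h x) ` K)"
  have carr: "K \<subseteq> carrier G" "(\<lambda>h. conjugate G h x) ` K \<subseteq> carrier G"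
    using subgroup.subset[OF K] x by auto
  have "conjugate G \<one> x \<in> ?A" by (intro generate.incl imageI subgroup.one_closed[OF K])
  then have x_in: "x \<in> ?A" using x by (simp add: conjugate_one)
  have mem: "a \<otimes> k \<in> ?A <#> K" if "a \<in> ?A" "k \<in> K" for a k
    using that by (auto simp: set_mult_def)
  have one_in: "\<one> \<in> K" "\<one> \<in> ?A" using K by (auto intro: subgroup.one_closed generate.one)
  fix g assume "g \<in> generate G (insert x K)"
  then show "g \<in> ?A <#> K"
  proof (induction rule: generate.induct)
    case one
    then show ?case using mem[of \<one> \<one>] one_in by simp
  next
    case (incl h)
    then consider "h = x" | "h \<in> K" by blast
    then show ?case
    proof cases
      case 1
      then show ?thesis using mem[OF x_in one_in(1)] x by simp
    next
      case 2
      then show ?thesis using mem[OF one_in(2) 2] carr by auto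
    qed
  next
    case (inv h)
    then consider "h = x" | "h \<in> K" by blast
    then show ?case
    proof cases
      case 1
      then show ?thesis using mem[OF generate_m_inv_closed[OF carr(2) x_in] one_in(1)] x by simp
    next
      case 2
      then show ?thesis
        using mem[OF one_in(2) subgroup.m_inv_closed[OF K 2]] carr by auto
    qed
  next
    case (eng g1 g2)
    then obtain a1 k1 a2 k2 where
      g: "a1 \<in> ?A" "k1 \<in> K" "g1 = a1 \<otimes> k1" "a2 \<in> ?A" "k2 \<in> K" "g2 = a2 \<otimes> k2"
      by (auto simp: set_mult_def)
    moreover have "a1 \<in> carrier G" "a2 \<in> carrier G" "k1 \<in> carrier G" "k2 \<in> carrier G"
      using g carr generate_incl[OF carr(2)] by auto
    ultimately have "g1 \<otimes> g2 = (a1 \<otimes> conjugate G (inv k1) a2) \<otimes> (k1 \<otimes> k2)"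
      by (simp add: conjugate_def m_assoc)
    moreover have "a1 \<otimes> conjugate G (inv k1) a2 \<in> ?A"
      using generate.eng[OF g(1) conjugate_in_generate_conjugates[OF x K _ g(4)]]
        subgroup.m_inv_closed[OF K g(2)] by blast
    ultimately show ?case using mem[OF _ subgroup.m_closed[OF K g(2) g(5)]] by simp
  qed
qed

lemma cube_one_conjugates_mult:
  assumes x: "x \<in> carrier G" and K: "subgroup K G" and K3: "\<forall>k\<in>K. k \<otimes> k \<otimes> k = \<one>"
    and xK3: "\<forall>k\<in>K. (x \<otimes> k) \<otimes> (x \<otimes> k) \<otimes> (x \<otimes> k) = \<one>"
    and k: "k \<in> K" and a: "a \<in> generate G ((\<lambda>h. conjugate G h x) ` K)"
  shows "(a \<otimes> k) \<otimes> (a \<otimes> k) \<otimes> (a \<otimes> k) = \<one>"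
proof -
  let ?X = "(\<lambda>h. conjugate G h x) ` K"
  let ?A = "generate G ?X"
  have X: "?X \<subseteq> carrier G" and A: "?A \<subseteq> carrier G"
    using x subgroup.subset[OF K] by (auto intro!: generate_incl)
  have k': "inv k \<in> K" "k \<in> carrier G" "inv k \<in> carrier G"
    using k subgroup.m_inv_closed[OF K] subgroup.subset[OF K] by auto
  define c where "c = conjugate G (inv k)"
  interpret c: group_hom G G c unfolding c_def using conjugate_hom k' by blast
  define N where "N b = b \<otimes> c b \<otimes> c (c b)" for b
  have N_cube: "N b = (b \<otimes> k) \<otimes> (b \<otimes> k) \<otimes> (b \<otimes> k)" if "b \<in> carrier G" for b
    using cube_mult_eq[OF that k'(2)] K3 k by (simp add: N_def c_def)
  have N_mult: "N (a1 \<otimes> a2) = N a1 \<otimes> N a2" if "a1 \<in> ?A" "a2 \<in> ?A" for a1 a2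
    unfolding N_def c_def
    using twisted_cube_mult[OF A _ k'(3) _ that] conjugates_commute[OF x K K3 xK3]
      conjugate_in_generate_conjugates[OF x K k'(1)] by blast
  have N_X: "N y = \<one>" if y: "y \<in> ?X" for y
  proof -
    obtain h where h: "h \<in> K" "y = conjugate G h x" using y by blast
    define u where "u = h \<otimes> k \<otimes> inv h"
    have u: "u \<in> K" "u \<in> carrier G" "h \<in> carrier G"
      using h k K subgroup.subset[OF K]
      by (auto simp: u_def subgroup.m_closed subgroup.m_inv_closed)
    interpret ch: group_hom G G "conjugate G h" using conjugate_hom u(3) by blast
    have "y \<otimes> k = conjugate G h (x \<otimes> u)"
      using h u x k' by (simp add: conjugate_def u_def m_assoc)
    then have "N y = conjugate G h ((x \<otimes> u) \<otimes> (x \<otimes> u) \<otimes> (x \<otimes> u))"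
      using N_cube h u x by (simp add: ch.hom_mult)
    with xK3 u show ?thesis by simp
  qed
  have "N b = \<one>" if "b \<in> ?A" for b
    using that
  proof (induction rule: generate.induct)
    case one
    then show ?case by (simp add: N_def)
  next
    case (incl y)
    then show ?case by (rule N_X)
  next
    case (inv y)
    have y: "y \<in> ?A" "inv y \<in> ?A"
      using generate.incl[OF inv] generate.inv[OF inv] by auto
    have "y \<in> carrier G" using inv X by blast
    then have "N y \<otimes> N (inv y) = \<one>"
      using N_mult[OF y, symmetric] by (simp add: N_def)
    moreover have "N (inv y) \<in> carrier G"
      using y A by (auto simp: N_def)
    ultimately show ?case using N_X[OF inv] by simp
  next
    case (eng b1 b2)
    then show ?case by (simp add: N_mult)
  qed
  with a A show ?thesis using N_cube[of a] by auto
qed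

lemma cube_one_generate_insert:
  assumes x: "x \<in> carrier G" and K: "subgroup K G" and K3: "\<forall>k\<in>K. k \<otimes> k \<otimes> k = \<one>"
    and xK3: "\<forall>k\<in>K. (x \<otimes> k) \<otimes> (x \<otimes> k) \<otimes> (x \<otimes> k) = \<one>"
    and g: "g \<in> generate G (insert x K)"
  shows "g \<otimes> g \<otimes> g = \<one>"
proof -
  obtain a k where "a \<in> generate G ((\<lambda>h. conjugate G h x) ` K)" "k \<in> K" "g = a \<otimes> k"
    using generate_insert_subset_set_mult[OF x K] g by (auto simp: set_mult_def)
  with cube_one_conjugates_mult[OF x K K3 xK3] show ?thesis by simp
qed

end

lemma (in group) normal_closure_normal:
  assumes "S \<subseteq> carrier G"
  shows "normal_closure G S \<lhd> G"
  unfolding normal_closure_def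
proof (rule normal_invI)
  have "{N. N \<lhd> G \<and> S \<subseteq> N} \<noteq> {}" using normal_self assms by blast
  then show "subgroup (\<Inter> {N. N \<lhd> G \<and> S \<subseteq> N}) G"
    by (auto intro: subgroups_Inter normal_imp_subgroup)
qed (auto simp: normal_inv_iff)

lemma subset_normal_closure: "S \<subseteq> normal_closure G S"
  unfolding normal_closure_def by blast

lemma normal_closure_least: "N \<lhd> G \<Longrightarrow> S \<subseteq> N \<Longrightarrow> normal_closure G S \<subseteq> N"
  unfolding normal_closure_def by blast

lemma (in normal) set_mult_Mod_iso: "(\<lambda>C. H <#> C) \<in> iso (G Mod H) (G Mod H)"
proof (rule group.iso_eq[OF factorgroup_is_group iso_set_refl])
  fix C assume "C \<in> carrier (G Mod H)"
  then obtain a where a: "a \<in> carrier G" "C = H #> a" by (auto simp: carrier_FactGroup)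
  then have "H <#> C = (H <#> H) #> a" by (simp add: setmult_rcos_assoc[OF subset subset])
  with a show "H <#> C = C" by (simp add: subgroup_mult_id is_subgroup)
qed

section \<open>Free reduction of words\<close>

definition flip_letter :: "'a \<times> bool \<Rightarrow> 'a \<times> bool" where
  "flip_letter x = (fst x, \<not> snd x)"

lemma cancelling_letters_iff [simp]:
  "(fst x = fst y \<and> snd x \<noteq> snd y) \<longleftrightarrow> y = flip_letter x"
  by (cases x; cases y) (auto simp: flip_letter_def)

lemma flip_letter_flip_letter [simp]: "flip_letter (flip_letter x) = x"
  by (simp add: flip_letter_def)

lemma push_letter_Cons [simp]:
  "push_letter x (y # ys) = (if y = flip_letter x then ys else x # y # ys)"
  by (simp only: push_letter.simps cancelling_letters_iff)

declare push_letter.simps(2) [simp del]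

lemma reduced_word_Nil [simp]: "reduced_word []"
  and reduced_word_singleton [simp]: "reduced_word [x]"
  by (simp_all add: reduced_word_def)

lemma reduced_word_Cons_Cons [simp]:
  "reduced_word (x # y # ys) \<longleftrightarrow> y \<noteq> flip_letter x \<and> reduced_word (y # ys)"
proof -
  have shift: "(\<forall>i. Suc i < length (x # y # ys) \<longrightarrow> P i) \<longleftrightarrow>
      P 0 \<and> (\<forall>i. Suc i < length (y # ys) \<longrightarrow> P (Suc i))" for P
    by (metis Suc_less_eq length_Cons not0_implies_Suc zero_less_Suc)
  show ?thesis
    unfolding reduced_word_def cancelling_letters_iff by (subst shift) simp
qed

lemma reduced_word_ConsD: "reduced_word (x # xs) \<Longrightarrow> reduced_word xs"
  by (cases xs) auto

lemma push_letter_Cons_reduced: "reduced_word (x # ys) \<Longrightarrow> push_letter x ys = x # ys"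
  by (cases ys) auto

lemma reduced_word_push_letter: "reduced_word ys \<Longrightarrow> reduced_word (push_letter x ys)"
  by (cases ys) (auto dest: reduced_word_ConsD)

lemma reduced_word_foldr_push_letter:
  "reduced_word ys \<Longrightarrow> reduced_word (foldr push_letter xs ys)"
  by (induction xs) (auto intro: reduced_word_push_letter)

lemma reduced_word_reduce_word: "reduced_word (reduce_word xs)"
  by (simp add: reduce_word_def reduced_word_foldr_push_letter)

lemma reduce_word_reduced: "reduced_word xs \<Longrightarrow> reduce_word xs = xs"
proof (induction xs)
  case (Cons x xs)
  then show ?case
    by (simp add: reduce_word_def push_letter_Cons_reduced reduced_word_ConsD)
qed (simp add: reduce_word_def)

lemma reduce_word_append: "reduce_word (xs @ ys) = foldr push_letter xs (reduce_word ys)"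
  by (simp add: reduce_word_def)

lemma push_letter_flip_letter_cancel:
  "reduced_word ys \<Longrightarrow> push_letter x (push_letter (flip_letter x) ys) = ys"
  by (cases ys) (auto simp: push_letter_Cons_reduced)

lemma foldr_push_letter_push_letter:
  assumes "reduced_word zs"
  shows "foldr push_letter (push_letter x ys) zs = push_letter x (foldr push_letter ys zs)"
proof (cases ys)
  case (Cons y ys')
  have "reduced_word (foldr push_letter ys' zs)"
    using assms by (rule reduced_word_foldr_push_letter)
  with Cons show ?thesis
    using push_letter_flip_letter_cancel[of "foldr push_letter ys' zs" x] by auto
qed simp

lemma foldr_push_letter_assoc:
  assumes "reduced_word zs"
  shows "foldr push_letter (foldr push_letter xs ys) zs = foldr push_letter xs (foldr push_letter ys zs)"
  by (induction xs) (simp_all add: foldr_push_letter_push_letter assms)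

lemma set_push_letter: "set (push_letter x ys) \<subseteq> insert x (set ys)"
  by (cases ys) auto

lemma set_foldr_push_letter: "set (foldr push_letter xs ys) \<subseteq> set xs \<union> set ys"
  by (induction xs) (use set_push_letter in fastforce)+

lemma set_reduce_word: "set (reduce_word xs) \<subseteq> set xs"
  using set_foldr_push_letter[of xs "[]"] by (simp add: reduce_word_def)

definition word_inverse :: "('a \<times> bool) list \<Rightarrow> ('a \<times> bool) list" where
  "word_inverse xs = rev (map flip_letter xs)"

lemma foldr_push_letter_word_inverse: "foldr push_letter (word_inverse xs) xs = []"
  by (induction xs) (simp_all add: word_inverse_def)

section \<open>The free group of rank 3\<close>

lemma F3_carrier: "carrier F3 = {xs. reduced_word xs \<and> set xs \<subseteq> {0..<3} \<times> UNIV}"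
  and F3_mult: "xs \<otimes>\<^bsub>F3\<^esub> ys = reduce_word (xs @ ys)"
  and F3_one: "\<one>\<^bsub>F3\<^esub> = []"
  by (simp_all add: F3_def)

lemma F3_letter_less: "w \<in> carrier F3 \<Longrightarrow> x \<in> set w \<Longrightarrow> fst x < 3"
  by (auto simp: F3_carrier)

lemma F3_mult_reduced: "reduced_word ys \<Longrightarrow> xs \<otimes>\<^bsub>F3\<^esub> ys = foldr push_letter xs ys"
  by (simp add: F3_mult reduce_word_append reduce_word_reduced)

lemma reduce_word_in_F3: "set xs \<subseteq> {0..<3} \<times> UNIV \<Longrightarrow> reduce_word xs \<in> carrier F3"
  using set_reduce_word[of xs] by (auto simp: F3_carrier reduced_word_reduce_word)

lemma word_inverse_in_F3: "u \<in> carrier F3 \<Longrightarrow> reduce_word (word_inverse u) \<in> carrier F3"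
  by (rule reduce_word_in_F3) (force simp: F3_carrier word_inverse_def flip_letter_def)

lemma word_inverse_mult_F3:
  assumes "u \<in> carrier F3"
  shows "reduce_word (word_inverse u) \<otimes>\<^bsub>F3\<^esub> u = []"
proof -
  have "reduce_word (word_inverse u) \<otimes>\<^bsub>F3\<^esub> u = foldr push_letter (foldr push_letter (word_inverse u) []) u"
    using assms by (simp add: F3_carrier F3_mult_reduced reduce_word_def)
  also have "\<dots> = foldr push_letter (word_inverse u) u"
    using assms by (simp add: F3_carrier foldr_push_letter_assoc)
  finally show ?thesis by (simp add: foldr_push_letter_word_inverse)
qed

lemma group_F3: "group F3"
proof (rule groupI)
  fix x y assume "x \<in> carrier F3" "y \<in> carrier F3"
  then show "x \<otimes>\<^bsub>F3\<^esub> y \<in> carrier F3"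
    unfolding F3_mult by (intro reduce_word_in_F3) (auto simp: F3_carrier)
next
  fix x y z assume "x \<in> carrier F3" "y \<in> carrier F3" "z \<in> carrier F3"
  then show "x \<otimes>\<^bsub>F3\<^esub> y \<otimes>\<^bsub>F3\<^esub> z = x \<otimes>\<^bsub>F3\<^esub> (y \<otimes>\<^bsub>F3\<^esub> z)"
    by (simp add: F3_carrier F3_mult_reduced reduced_word_foldr_push_letter foldr_push_letter_assoc)
next
  fix x assume x: "x \<in> carrier F3"
  then show "\<one>\<^bsub>F3\<^esub> \<otimes>\<^bsub>F3\<^esub> x = x"
    by (simp add: F3_carrier F3_one F3_mult_reduced)
  show "\<exists>y\<in>carrier F3. y \<otimes>\<^bsub>F3\<^esub> x = \<one>\<^bsub>F3\<^esub>"
    using word_inverse_in_F3[OF x] word_inverse_mult_F3[OF x] by (auto simp: F3_one)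
qed (simp add: F3_carrier F3_one)

interpretation F3: group F3
  by (rule group_F3)

lemma F3_inv: "u \<in> carrier F3 \<Longrightarrow> inv\<^bsub>F3\<^esub> u = reduce_word (word_inverse u)"
  using F3.inv_equality word_inverse_in_F3 word_inverse_mult_F3 by (simp add: F3_one)

lemma letters_F3_inv: "u \<in> carrier F3 \<Longrightarrow> fst ` set (inv\<^bsub>F3\<^esub> u) \<subseteq> fst ` set u"
  using set_reduce_word[of "word_inverse u"] by (force simp: F3_inv word_inverse_def flip_letter_def)

lemma letters_F3_mult: "fst ` set (u \<otimes>\<^bsub>F3\<^esub> v) \<subseteq> fst ` set u \<union> fst ` set v"
  using set_reduce_word[of "u @ v"] by (auto simp: F3_mult)

section \<open>Substitution homomorphisms\<close>

definition eval_letter :: "('a, 'b) monoid_scheme \<Rightarrow> ('c \<Rightarrow> 'a) \<Rightarrow> 'c \<times> bool \<Rightarrow> 'a" where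
  "eval_letter G g x = (if snd x then g (fst x) else inv\<^bsub>G\<^esub> (g (fst x)))"

definition eval_word :: "('a, 'b) monoid_scheme \<Rightarrow> ('c \<Rightarrow> 'a) \<Rightarrow> ('c \<times> bool) list \<Rightarrow> 'a" where
  "eval_word G g w = word_eval G (map (apfst g) w)"

lemma eval_word_Nil [simp]: "eval_word G g [] = \<one>\<^bsub>G\<^esub>"
  and eval_word_Cons [simp]: "eval_word G g (x # w) = eval_letter G g x \<otimes>\<^bsub>G\<^esub> eval_word G g w"
  by (cases x; simp add: eval_word_def word_eval_def eval_letter_def)+

lemma eval_word_cong: "\<forall>x\<in>set w. g (fst x) = g' (fst x) \<Longrightarrow> eval_word G g w = eval_word G g' w"
  by (induction w) (auto simp: eval_letter_def)

context group
begin

lemma eval_letter_closed: "g (fst x) \<in> carrier G \<Longrightarrow> eval_letter G g x \<in> carrier G"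
  by (simp add: eval_letter_def)

lemma eval_word_closed: "\<forall>x\<in>set w. g (fst x) \<in> carrier G \<Longrightarrow> eval_word G g w \<in> carrier G"
  by (induction w) (auto intro: eval_letter_closed)

lemma eval_letter_flip_letter:
  "g (fst x) \<in> carrier G \<Longrightarrow> eval_letter G g x \<otimes> eval_letter G g (flip_letter x) = \<one>"
  by (simp add: eval_letter_def flip_letter_def)

lemma eval_word_push_letter:
  assumes "\<forall>y\<in>insert x (set r). g (fst y) \<in> carrier G"
  shows "eval_word G g (push_letter x r) = eval_letter G g x \<otimes> eval_word G g r"
proof (cases r)
  case (Cons y r')
  have closed: "eval_letter G g x \<in> carrier G" "eval_letter G g y \<in> carrier G"
    "eval_word G g r' \<in> carrier G"
    using assms Cons by (auto intro!: eval_letter_closed eval_word_closed)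
  show ?thesis
  proof (cases "y = flip_letter x")
    case True
    then have "eval_letter G g x \<otimes> eval_letter G g y = \<one>"
      using assms eval_letter_flip_letter[of g x] by simp
    with Cons True closed show ?thesis by (simp flip: m_assoc)
  qed (simp add: Cons)
qed (use assms eval_letter_closed in simp)

lemma eval_word_foldr_push_letter:
  assumes "\<forall>y\<in>set xs \<union> set ys. g (fst y) \<in> carrier G"
  shows "eval_word G g (foldr push_letter xs ys) = eval_word G g xs \<otimes> eval_word G g ys"
  using assms
proof (induction xs)
  case (Cons x xs)
  have "eval_word G g (foldr push_letter (x # xs) ys)
      = eval_letter G g x \<otimes> eval_word G g (foldr push_letter xs ys)"
    using Cons.prems set_foldr_push_letter[of xs ys] by (simp, intro eval_word_push_letter) auto
  with Cons show ?case by (simp add: m_assoc eval_letter_closed eval_word_closed)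
qed (simp add: eval_word_closed)

lemma eval_word_hom:
  assumes "\<forall>i<3. g i \<in> carrier G"
  shows "eval_word G g \<in> hom F3 G"
proof (rule homI)
  fix u v assume uv: "u \<in> carrier F3" "v \<in> carrier F3"
  then have "\<forall>y\<in>set u \<union> set v. g (fst y) \<in> carrier G"
    using assms by (auto simp: F3_carrier)
  with uv show "eval_word G g (u \<otimes>\<^bsub>F3\<^esub> v) = eval_word G g u \<otimes> eval_word G g v"
    by (simp add: F3_carrier F3_mult_reduced eval_word_foldr_push_letter)
qed (use assms in \<open>auto simp: F3_carrier intro!: eval_word_closed\<close>)

lemma eval_word_in_generate:
  "\<forall>x\<in>set w. fst x \<in> I \<Longrightarrow> g ` I \<subseteq> carrier G \<Longrightarrow> eval_word G g w \<in> generate G (g ` I)"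
  by (induction w) (auto simp: eval_letter_def intro: generate.intros)

end

lemma (in group_hom) hom_eval_word:
  "\<forall>x\<in>set w. g (fst x) \<in> carrier G \<Longrightarrow> h (eval_word G g w) = eval_word H (h \<circ> g) w"
  by (induction w) (auto simp: eval_letter_def G.eval_letter_closed G.eval_word_closed)

definition F3_gen :: "nat \<Rightarrow> (nat \<times> bool) list" where
  "F3_gen i = [(i, True)]"

lemma F3_gen_in_F3: "i < 3 \<Longrightarrow> F3_gen i \<in> carrier F3"
  by (simp add: F3_gen_def F3_carrier)

lemma eval_letter_F3_gen: "fst x < 3 \<Longrightarrow> eval_letter F3 F3_gen x = [x]"
  using F3_gen_in_F3[of "fst x"]
  by (cases x) (auto simp: eval_letter_def F3_inv F3_gen_def word_inverse_def flip_letter_def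
      reduce_word_def)

lemma eval_word_F3_gen: "w \<in> carrier F3 \<Longrightarrow> eval_word F3 F3_gen w = w"
proof (induction w)
  case (Cons x w)
  then have "w \<in> carrier F3" "fst x < 3" by (auto simp: F3_carrier dest: reduced_word_ConsD)
  with Cons show ?case
    by (simp add: eval_letter_F3_gen F3_mult_reduced F3_carrier push_letter_Cons_reduced)
qed (simp add: F3_one)

lemma (in group) eval_word_of_F3_gen: "g i \<in> carrier G \<Longrightarrow> eval_word G g (F3_gen i) = g i"
  by (simp add: F3_gen_def eval_letter_def)

lemma generate_F3_gen: "generate F3 (F3_gen ` {0..<3}) = carrier F3"
proof
  show "generate F3 (F3_gen ` {0..<3}) \<subseteq> carrier F3"
    by (rule F3.generate_incl) (auto intro: F3_gen_in_F3)
  show "carrier F3 \<subseteq> generate F3 (F3_gen ` {0..<3})"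
  proof
    fix w assume "w \<in> carrier F3"
    then have "eval_word F3 F3_gen w \<in> generate F3 (F3_gen ` {0..<3})"
      using F3_gen_in_F3 by (intro F3.eval_word_in_generate) (auto simp: F3_carrier F3_gen_def)
    with \<open>w \<in> carrier F3\<close> show "w \<in> generate F3 (F3_gen ` {0..<3})"
      by (simp add: eval_word_F3_gen)
  qed
qed

lemma letters_generate_F3_gen:
  assumes "I \<subseteq> {0..<3}" "v \<in> generate F3 (F3_gen ` I)"
  shows "fst ` set v \<subseteq> I"
  using assms(2)
proof (induction rule: generate.induct)
  case (inv h)
  then show ?case
    using assms(1) letters_F3_inv[of h] by (force simp: F3_gen_def F3_carrier)
next
  case (eng h1 h2)
  then show ?case using letters_F3_mult[of h1 h2] by blast
qed (auto simp: F3_one F3_gen_def)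

section \<open>Primitive elements\<close>

lemma primitive_in_carrier: "primitive G x \<Longrightarrow> x \<in> carrier G"
  unfolding primitive_def free_basis_def by blast

lemma reduced_word_map_apfst:
  "inj_on k (fst ` set ws) \<Longrightarrow> reduced_word (map (apfst k) ws) \<longleftrightarrow> reduced_word ws"
proof (induction ws rule: induct_list012)
  case (3 x y ys)
  have "fst x \<in> fst ` set (x # y # ys)" "fst y \<in> fst ` set (x # y # ys)" by auto
  then have "k (fst y) = k (fst x) \<longleftrightarrow> fst y = fst x"
    using inj_onD[OF "3.prems"] by metis
  then have "apfst k y = flip_letter (apfst k x) \<longleftrightarrow> y = flip_letter x"
    by (cases x; cases y) (auto simp: flip_letter_def)
  moreover have "inj_on k (fst ` set (y # ys))"
    using "3.prems" by (rule inj_on_subset) auto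
  ultimately show ?case using "3.IH"(2) by simp
qed simp_all

lemma generate_F3_image:
  assumes g: "\<forall>i<3. g i \<in> carrier F3" and h: "\<forall>i<3. h i \<in> carrier F3"
    and gh: "\<forall>w\<in>carrier F3. eval_word F3 g (eval_word F3 h w) = w"
  shows "generate F3 (g ` {0..<3}) = carrier F3"
proof
  have sub: "g ` {0..<3} \<subseteq> carrier F3" using g by auto
  then show "generate F3 (g ` {0..<3}) \<subseteq> carrier F3" by (rule F3.generate_incl)
  show "carrier F3 \<subseteq> generate F3 (g ` {0..<3})"
  proof
    fix w assume w: "w \<in> carrier F3"
    have "eval_word F3 h w \<in> carrier F3"
      using F3.eval_word_hom[OF h] w by (auto simp: hom_def)
    then have "eval_word F3 g (eval_word F3 h w) \<in> generate F3 (g ` {0..<3})"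
      using sub by (intro F3.eval_word_in_generate) (auto simp: F3_carrier)
    with gh w show "w \<in> generate F3 (g ` {0..<3})" by simp
  qed
qed

lemma word_eval_F3_image_neq_one:
  assumes hg: "\<forall>w\<in>carrier F3. eval_word F3 h (eval_word F3 g w) = w"
    and ws: "ws \<noteq> []" "set ws \<subseteq> g ` {0..<3} \<times> UNIV" "reduced_word ws"
  shows "word_eval F3 ws \<noteq> \<one>\<^bsub>F3\<^esub>"
proof
  define ws' where "ws' = map (apfst (inv_into {0..<3} g)) ws"
  have letters: "fst ` set ws \<subseteq> g ` {0..<3}" using ws by force
  have "map (apfst g) ws' = ws"
    using ws unfolding ws'_def by (force intro!: map_idI simp: f_inv_into_f)
  moreover assume "word_eval F3 ws = \<one>\<^bsub>F3\<^esub>"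
  ultimately have "eval_word F3 g ws' = []" by (simp add: eval_word_def F3_one)
  moreover have "reduced_word ws'"
    using letters ws unfolding ws'_def by (subst reduced_word_map_apfst) (auto intro: inj_on_inv_into)
  moreover have "set ws' \<subseteq> {0..<3} \<times> UNIV"
  proof -
    have "inv_into {0..<3} g a < 3" if "a \<in> fst ` set ws" for a
      using inv_into_into[of a g "{0..<3}"] letters that by auto
    then show ?thesis by (force simp: ws'_def)
  qed
  ultimately have "ws' \<in> carrier F3" "eval_word F3 g ws' = []" by (simp_all add: F3_carrier)
  then have "ws' = eval_word F3 h []" using hg by metis
  with ws show False by (simp add: ws'_def F3_one)
qed

lemma free_basis_F3_image:
  assumes "\<forall>i<3. g i \<in> carrier F3" and "\<forall>i<3. h i \<in> carrier F3"
    and "\<forall>w\<in>carrier F3. eval_word F3 h (eval_word F3 g w) = w"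
    and "\<forall>w\<in>carrier F3. eval_word F3 g (eval_word F3 h w) = w"
  shows "free_basis F3 (g ` {0..<3})"
  unfolding free_basis_def
proof (intro conjI allI impI)
  show "g ` {0..<3} \<subseteq> carrier F3" using assms(1) by auto
  show "generate F3 (g ` {0..<3}) = carrier F3" using assms(1,2,4) by (rule generate_F3_image)
  show "word_eval F3 ws \<noteq> \<one>\<^bsub>F3\<^esub>"
    if "ws \<noteq> [] \<and> set ws \<subseteq> g ` {0..<3} \<times> UNIV \<and> reduced_word ws" for ws
    using assms(3) that by (intro word_eval_F3_image_neq_one) auto
qed

text \<open>The automorphism \<open>x\<^sub>i \<mapsto> x\<^sub>i u\<close> fixing the other generators; when \<open>u\<close> avoids
  \<open>x\<^sub>i\<close>, its inverse is the transvection by \<open>u\<inverse>\<close>.\<close>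
definition transvection :: "nat \<Rightarrow> (nat \<times> bool) list \<Rightarrow> nat \<Rightarrow> (nat \<times> bool) list" where
  "transvection i u j = (if j = i then F3_gen i \<otimes>\<^bsub>F3\<^esub> u else F3_gen j)"

lemma transvection_in_F3: "i < 3 \<Longrightarrow> u \<in> carrier F3 \<Longrightarrow> \<forall>j<3. transvection i u j \<in> carrier F3"
  by (simp add: transvection_def F3_gen_in_F3)

lemma eval_word_transvection_avoiding:
  assumes "w \<in> carrier F3" "i \<notin> fst ` set w"
  shows "eval_word F3 (transvection i v) w = w"
proof -
  have "eval_word F3 (transvection i v) w = eval_word F3 F3_gen w"
    using assms(2) by (intro eval_word_cong) (force simp: transvection_def)
  with assms(1) show ?thesis by (simp add: eval_word_F3_gen)
qed

lemma transvection_inverse: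
  assumes i: "i < 3" and u: "u \<in> carrier F3" "i \<notin> fst ` set u" and w: "w \<in> carrier F3"
  shows "eval_word F3 (transvection i (inv\<^bsub>F3\<^esub> u)) (eval_word F3 (transvection i u) w) = w"
proof -
  let ?\<phi> = "transvection i u" and ?\<psi> = "transvection i (inv\<^bsub>F3\<^esub> u)"
  interpret \<psi>: group_hom F3 F3 "eval_word F3 ?\<psi>"
    using F3.eval_word_hom transvection_in_F3 i u
    by (simp add: group_hom_def group_hom_axioms_def group_F3)
  have \<phi>_in: "\<forall>x\<in>set w. ?\<phi> (fst x) \<in> carrier F3"
    using w transvection_in_F3[OF i u(1)] F3_letter_less by blast
  have "eval_word F3 ?\<psi> (?\<phi> j) = F3_gen j" if "j < 3" for j
  proof (cases "j = i")
    case True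
    have "eval_word F3 ?\<psi> (?\<phi> i) = ?\<psi> i \<otimes>\<^bsub>F3\<^esub> u"
      using i u by (simp add: transvection_def F3_gen_in_F3 F3.eval_word_of_F3_gen
          eval_word_transvection_avoiding)
    also have "\<dots> = F3_gen i"
      using i u by (simp add: transvection_def F3_gen_in_F3 F3.m_assoc)
    finally show ?thesis using True by simp
  qed (use that in \<open>simp add: transvection_def F3_gen_in_F3 F3.eval_word_of_F3_gen\<close>)
  then have "eval_word F3 (eval_word F3 ?\<psi> \<circ> ?\<phi>) w = eval_word F3 F3_gen w"
    using w by (intro eval_word_cong) (auto simp: F3_carrier)
  with w \<phi>_in show ?thesis by (simp add: \<psi>.hom_eval_word eval_word_F3_gen)
qed

lemma primitive_F3_gen_mult:
  assumes i: "i < 3" and u: "u \<in> carrier F3" "i \<notin> fst ` set u"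
  shows "primitive F3 (F3_gen i \<otimes>\<^bsub>F3\<^esub> u)"
proof -
  have u': "inv\<^bsub>F3\<^esub> u \<in> carrier F3" "i \<notin> fst ` set (inv\<^bsub>F3\<^esub> u)"
    using u letters_F3_inv[OF u(1)] by auto
  have "free_basis F3 (transvection i u ` {0..<3})"
  proof (rule free_basis_F3_image)
    show "\<forall>w\<in>carrier F3. eval_word F3 (transvection i u)
        (eval_word F3 (transvection i (inv\<^bsub>F3\<^esub> u)) w) = w"
      using transvection_inverse[OF i u'] u(1) by (simp add: F3.inv_inv)
  qed (use i u u' transvection_in_F3 transvection_inverse[OF i u] in auto)
  moreover have "F3_gen i \<otimes>\<^bsub>F3\<^esub> u \<in> transvection i u ` {0..<3}"
    using i by (force simp: transvection_def)
  ultimately show ?thesis unfolding primitive_def by blast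
qed

section \<open>The two kernels coincide\<close>

lemma N_BT_normal: "N_BT \<lhd> F3"
  unfolding N_BT_def
  by (rule F3.normal_closure_normal) (auto simp: primitive_in_carrier)

lemma cube_one_generate_F3_gen_image:
  assumes h: "group_hom F3 Q h"
    and prim: "\<forall>p. primitive F3 p \<longrightarrow> h p \<otimes>\<^bsub>Q\<^esub> h p \<otimes>\<^bsub>Q\<^esub> h p = \<one>\<^bsub>Q\<^esub>"
    and I: "I \<subseteq> {0..<3}"
  shows "\<forall>g\<in>generate Q (h ` F3_gen ` I). g \<otimes>\<^bsub>Q\<^esub> g \<otimes>\<^bsub>Q\<^esub> g = \<one>\<^bsub>Q\<^esub>"
proof -
  interpret h: group_hom F3 Q h by (rule h)
  have gen_in: "F3_gen ` J \<subseteq> carrier F3" if "J \<subseteq> {0..<3}" for J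
    using that F3_gen_in_F3 by auto
  have "finite I" using finite_subset[OF I] by simp
  then show ?thesis
    using I
  proof (induction I rule: finite_induct)
    case empty
    then show ?case by (simp add: h.H.generate_empty)
  next
    case (insert i I)
    let ?x = "h (F3_gen i)" and ?K = "generate Q (h ` F3_gen ` I)"
    have I: "I \<subseteq> {0..<3}" and i: "i < 3" using insert.prems by auto
    have "?x \<otimes>\<^bsub>Q\<^esub> u \<otimes>\<^bsub>Q\<^esub> (?x \<otimes>\<^bsub>Q\<^esub> u) \<otimes>\<^bsub>Q\<^esub> (?x \<otimes>\<^bsub>Q\<^esub> u) = \<one>\<^bsub>Q\<^esub>"
      if u: "u \<in> ?K" for u
    proof -
      obtain v where v: "v \<in> generate F3 (F3_gen ` I)" "u = h v"
        using u h.generate_img[OF gen_in[OF I]] by auto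
      have v_in: "v \<in> carrier F3" using F3.generate_incl[OF gen_in[OF I]] v(1) by blast
      have "i \<notin> fst ` set v" using letters_generate_F3_gen[OF I v(1)] insert.hyps(2) by blast
      then have "primitive F3 (F3_gen i \<otimes>\<^bsub>F3\<^esub> v)"
        by (rule primitive_F3_gen_mult[OF i v_in])
      with prim have "h (F3_gen i \<otimes>\<^bsub>F3\<^esub> v) \<otimes>\<^bsub>Q\<^esub> h (F3_gen i \<otimes>\<^bsub>F3\<^esub> v)
          \<otimes>\<^bsub>Q\<^esub> h (F3_gen i \<otimes>\<^bsub>F3\<^esub> v) = \<one>\<^bsub>Q\<^esub>" by blast
      with v v_in F3_gen_in_F3[OF i] show ?thesis by simp
    qed
    moreover have "subgroup ?K Q"
      using gen_in[OF I] by (intro h.H.generate_is_subgroup) auto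
    moreover have "generate Q (h ` F3_gen ` insert i I) \<subseteq> generate Q (insert ?x ?K)"
      by (intro h.H.mono_generate) (auto intro: generate.incl)
    moreover have "?x \<in> carrier Q" using F3_gen_in_F3[OF i] by simp
    ultimately show ?case
      using insert.IH[OF I] h.H.cube_one_generate_insert by blast
  qed
qed

lemma cube_one_of_primitive_cubes_one:
  assumes h: "group_hom F3 Q h"
    and prim: "\<forall>p. primitive F3 p \<longrightarrow> h p \<otimes>\<^bsub>Q\<^esub> h p \<otimes>\<^bsub>Q\<^esub> h p = \<one>\<^bsub>Q\<^esub>"
    and w: "w \<in> carrier F3"
  shows "h w \<otimes>\<^bsub>Q\<^esub> h w \<otimes>\<^bsub>Q\<^esub> h w = \<one>\<^bsub>Q\<^esub>"
proof -
  interpret h: group_hom F3 Q h by (rule h)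
  have "F3_gen ` {0..<3} \<subseteq> carrier F3" using F3_gen_in_F3 by auto
  then have "h w \<in> generate Q (h ` F3_gen ` {0..<3})"
    using w by (simp add: h.generate_img generate_F3_gen)
  then show ?thesis using cube_one_generate_F3_gen_image[OF h prim] by blast
qed

lemma cube_in_N_BT:
  assumes w: "w \<in> carrier F3"
  shows "w \<otimes>\<^bsub>F3\<^esub> w \<otimes>\<^bsub>F3\<^esub> w \<in> N_BT"
proof -
  interpret normal N_BT F3 by (rule N_BT_normal)
  let ?\<pi> = "\<lambda>a. N_BT #>\<^bsub>F3\<^esub> a"
  interpret \<pi>: group_hom F3 "F3 Mod N_BT" ?\<pi>
    by (intro group_hom.intro group_hom_axioms.intro group_F3 factorgroup_is_group r_coset_hom_Mod)
  have "?\<pi> p \<otimes>\<^bsub>F3 Mod N_BT\<^esub> ?\<pi> p \<otimes>\<^bsub>F3 Mod N_BT\<^esub> ?\<pi> p = \<one>\<^bsub>F3 Mod N_BT\<^esub>"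
    if "primitive F3 p" for p
  proof -
    have p: "p \<in> carrier F3" by (rule primitive_in_carrier[OF that])
    have "p [^]\<^bsub>F3\<^esub> (3::nat) \<in> {x [^]\<^bsub>F3\<^esub> (3::nat) | x. primitive F3 x}"
      using that by blast
    then have "p [^]\<^bsub>F3\<^esub> (3::nat) \<in> N_BT"
      unfolding N_BT_def by (rule subsetD[OF subset_normal_closure])
    then have "p \<otimes>\<^bsub>F3\<^esub> p \<otimes>\<^bsub>F3\<^esub> p \<in> N_BT" by (simp add: F3.nat_pow_three p)
    with p have "?\<pi> (p \<otimes>\<^bsub>F3\<^esub> p \<otimes>\<^bsub>F3\<^esub> p) = N_BT"
      by (intro F3.coset_join2[OF _ is_subgroup]) simp_all
    with p show ?thesis by (simp add: \<pi>.hom_mult)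
  qed
  then have "?\<pi> w \<otimes>\<^bsub>F3 Mod N_BT\<^esub> ?\<pi> w \<otimes>\<^bsub>F3 Mod N_BT\<^esub> ?\<pi> w = \<one>\<^bsub>F3 Mod N_BT\<^esub>"
    using w by (intro cube_one_of_primitive_cubes_one[OF \<pi>.group_hom_axioms]) auto
  with w have "?\<pi> (w \<otimes>\<^bsub>F3\<^esub> w \<otimes>\<^bsub>F3\<^esub> w) = N_BT" by (simp add: \<pi>.hom_mult)
  moreover have "w \<otimes>\<^bsub>F3\<^esub> w \<otimes>\<^bsub>F3\<^esub> w \<in> carrier F3" using w by simp
  ultimately show ?thesis by (rule F3.coset_join1[OF _ _ is_subgroup])
qed

lemma N_B_eq_N_BT: "N_B = N_BT"
proof
  have "{x [^]\<^bsub>F3\<^esub> (3::nat) | x. x \<in> carrier F3} \<subseteq> N_BT"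
    using cube_in_N_BT by (auto simp: F3.nat_pow_three)
  then show "N_B \<subseteq> N_BT"
    unfolding N_B_def by (rule normal_closure_least[OF N_BT_normal])
  have "N_B \<lhd> F3"
    unfolding N_B_def by (rule F3.normal_closure_normal) auto
  moreover have "{x [^]\<^bsub>F3\<^esub> (3::nat) | x. primitive F3 x} \<subseteq> N_B"
    unfolding N_B_def
    by (intro subset_trans[OF _ subset_normal_closure]) (auto intro: primitive_in_carrier)
  ultimately show "N_BT \<subseteq> N_B"
    unfolding N_BT_def by (rule normal_closure_least)
qed

theorem lemma6p4:
  shows "(\<lambda>C. N_B <#>\<^bsub>F3\<^esub> C) \<in> iso (F3 Mod N_BT) (F3 Mod N_B)"
  using normal.set_mult_Mod_iso[OF N_BT_normal] by (simp add: N_B_eq_N_BT)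

end
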